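(* Let $f(\bar u)=h(\tilde x(\bar u))+g(\bar u)$ and $c_f$ be as in the context. Let $\bar u_0\in\mathbb{R}^{\tau p}$ and let $0<\gamma_{\min}\le\gamma_{\max}$. Consider the regularized Gauss–Newton iterates $$\bar u_{k+1}=\bar u_k+\operatorname{argmin}_{\bar v\in\mathbb{R}^{\tau p}}\Big\{c_f(\bar u_k+\bar v;\bar u_k)+\tfrac{1}{2\gamma_k}\|\bar v\|_2^2\Big\},$$ where the step sizes satisfy $\gamma_{\min}\le\gamma_k\le\gamma_{\max}$ and the sufficient decrease condition $$f(\bar u_{k+1})\le c_f(\bar u_{k+1};\bar u_k)+\tfrac{1}{2\gamma_k}\|\bar u_{k+1}-\bar u_k\|_2^2.$$ Then the objective values $f(\bar u_k)$ decrease over the iterations and for every $N\ge0$, $$\min_{k=0,\ldots,N}\|\nabla f(\bar u_k)\|^2\le\frac{2L(f(\bar u_0)-f^* )}{N+1},$$ where $L=\max_{\gamma\in[\gamma_{\min},\gamma_{\max}]}\gamma(\ell_{\tilde x,S}^2L_h+L_g+\gamma^{-1})^2$ and $f^*=\lim_{k\to\infty}f(\bar u_k)$.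
   Context: Let $h:\mathbb{R}^{\tau d}\to\mathbb{R}$ and $g:\mathbb{R}^{\tau p}\to\mathbb{R}$ be convex quadratic functions with smoothness constants $L_h$, $L_g$ (Lipschitz constants of their gradients), and $\tilde x:\mathbb{R}^{\tau p}\to\mathbb{R}^{\tau d}$ differentiable with continuous gradients; $f(\bar u)=h(\tilde x(\bar u))+g(\bar u)$. For differentiable $F:\mathbb{R}^n\to\mathbb{R}^m$, $\nabla F(z)\in\mathbb{R}^{n\times m}$ is the transposed Jacobian. The convex model is $c_f(\bar u+\bar v;\bar u)=h(\tilde x(\bar u)+\nabla\tilde x(\bar u)^\top\bar v)+g(\bar u+\bar v)$. $S=\{\bar u:f(\bar u)\le f(\bar u_0)\}$ is the initial sub-level set and $\ell_{\tilde x,S}$ the Lipschitz constant of $\tilde x$ on $S$. *)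

theory Defs
  imports "HOL-Analysis.Analysis"
begin

definition convex_quadratic :: "('a::euclidean_space \<Rightarrow> real) \<Rightarrow> bool" where
  "convex_quadratic q \<longleftrightarrow>
     (\<exists>Q b c. linear Q \<and> (\<forall>x y. Q x \<bullet> y = x \<bullet> Q y) \<and> (\<forall>x. 0 \<le> x \<bullet> Q x) \<and>
              (\<forall>x. q x = (1/2) * (x \<bullet> Q x) + b \<bullet> x + c))"

definition is_gradient :: "('a::euclidean_space \<Rightarrow> real) \<Rightarrow> ('a \<Rightarrow> 'a) \<Rightarrow> bool" where
  "is_gradient F G \<longleftrightarrow> (\<forall>x. (F has_derivative (\<lambda>v. G x \<bullet> v)) (at x))"

text \<open>Convex model c_f(w; u) = h(x(u) + Dx(u)(w - u)) + g(w), where Dx(u) is the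
  derivative (Jacobian) of x at u, i.e. Dx(u) v = (nabla x(u))^T v.\<close>
definition conv_model ::
  "('x::euclidean_space \<Rightarrow> real) \<Rightarrow> ('u::euclidean_space \<Rightarrow> real) \<Rightarrow> ('u \<Rightarrow> 'x)
    \<Rightarrow> ('u \<Rightarrow> ('u \<Rightarrow>\<^sub>L 'x)) \<Rightarrow> 'u \<Rightarrow> 'u \<Rightarrow> real" where
  "conv_model h g xt Dx w u = h (xt u + blinfun_apply (Dx u) (w - u)) + g w"

end

theory Submission
  imports Defs
begin

(*
  Write v_k = u_(k+1) - u_k and phi_k(v) = c_f(u_k + v; u_k) + |v|^2 / (2 gamma_k).  Since h and g
  are quadratic, phi_k(v + t d) is a quadratic polynomial in t whose t^2-coefficient is at least
  |d|^2 / (2 gamma_k).  At the minimiser v_k the linear coefficient therefore vanishes for every d,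
  and phi_k(0) = f(u_k) exceeds phi_k(v_k) by at least |v_k|^2 / (2 gamma_k); with sufficient
  decrease, f(u_k) - f(u_(k+1)) >= |v_k|^2 / (2 gamma_k).
  Comparing the vanishing linear coefficient with the chain rule for grad f(u_k) and using the
  Lipschitz bounds gives |grad f(u_k)| <= (ell^2 Lh + Lg + 1/gamma_k) |v_k|, so
  |grad f(u_k)|^2 <= 2 L (f(u_k) - f(u_(k+1))), and telescoping bounds the minimum by the average.
  The bound |Dx(u_k) w| <= ell |w| holds although x is only Lipschitz on the sublevel set S: when
  grad f(u_k) <> 0, every descent direction at u_k points into S, and descent directions span an
  open half-space.
*)

lemma linear_coeff_zero_if_quadratic_nonneg:
  fixes a b :: real
  assumes "\<And>t. 0 \<le> t * a + t\<^sup>2 * b"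
  shows "a = 0"
proof -
  define B where "B = \<bar>b\<bar> + 1"
  have "B > 0" unfolding B_def by simp
  define t where "t = - a / B"
  have "t * a + t\<^sup>2 * b \<le> t * a + t\<^sup>2 * (B - 1)"
    unfolding B_def by (simp add: mult_left_mono)
  also have "\<dots> = - (a / B)\<^sup>2"
    unfolding t_def using \<open>B > 0\<close> by (simp add: field_simps power2_eq_square)
  finally have "(a / B)\<^sup>2 \<le> 0"
    using assms[of t] by linarith
  then show "a = 0"
    using \<open>B > 0\<close> by simp
qed

lemma descent_direction_eventually_below:
  fixes F :: "'a::real_inner \<Rightarrow> real"
  assumes "(F has_derivative (\<lambda>v. n \<bullet> v)) (at x)" and "n \<bullet> w < 0"
  shows "\<forall>\<^sub>F t in at_right 0. F (x + t *\<^sub>R w) < F x"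
proof -
  have "((\<lambda>t. F (x + t *\<^sub>R w)) has_real_derivative n \<bullet> w) (at 0)"
    unfolding has_field_derivative_def
    by (rule has_derivative_eq_rhs, rule has_derivative_compose[of "\<lambda>t. x + t *\<^sub>R w" _ _ _ F],
        auto intro!: derivative_eq_intros assms(1)[simplified] simp: algebra_simps)
  from has_real_derivative_neg_dec_right[OF this assms(2)]
  obtain d where "d > 0" "\<And>t. 0 < t \<Longrightarrow> t < d \<Longrightarrow> F (x + t *\<^sub>R w) < F x"
    by auto
  then show ?thesis
    unfolding eventually_at_right_field by (auto intro!: exI[of _ d])
qed

lemma difference_quotient_tendsto:
  fixes \<phi> :: "real \<Rightarrow> 'b::real_normed_vector"
  assumes "(\<phi> has_vector_derivative v) (at 0)"
  shows "((\<lambda>t. (\<phi> t - \<phi> 0) /\<^sub>R t) \<longlongrightarrow> v) (at 0)"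
proof -
  have "(\<lambda>t. norm (\<phi> (0 + t) - \<phi> 0 - t *\<^sub>R v) / norm t) \<midarrow>0\<rightarrow> 0"
    using assms unfolding has_vector_derivative_def has_derivative_at by blast
  moreover have "norm (\<phi> t - \<phi> 0 - t *\<^sub>R v) / norm t = norm ((\<phi> t - \<phi> 0) /\<^sub>R t - v)"
    if "t \<noteq> 0" for t
  proof -
    have "(\<phi> t - \<phi> 0) /\<^sub>R t - v = (\<phi> t - \<phi> 0 - t *\<^sub>R v) /\<^sub>R t"
      using that by (simp add: algebra_simps)
    then show ?thesis by (simp add: divide_inverse mult.commute)
  qed
  ultimately have "(\<lambda>t. norm ((\<phi> t - \<phi> 0) /\<^sub>R t - v)) \<midarrow>0\<rightarrow> 0"
    by (simp cong: LIM_cong)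
  then show ?thesis
    by (simp add: tendsto_norm_zero_iff LIM_zero_iff)
qed

lemma lipschitz_on_directional_derivative_bound:
  fixes X :: "'a::real_normed_vector \<Rightarrow> 'b::real_normed_vector"
  assumes lip: "ell-lipschitz_on S X" and deriv: "(X has_derivative A) (at x)" and "x \<in> S"
    and inside: "\<forall>\<^sub>F t in at_right 0. x + t *\<^sub>R w \<in> S"
  shows "norm (A w) \<le> ell * norm w"
proof -
  have "((\<lambda>t. X (x + t *\<^sub>R w)) has_vector_derivative A w) (at 0)"
    unfolding has_vector_derivative_def
    by (rule has_derivative_eq_rhs, rule has_derivative_compose[of "\<lambda>t. x + t *\<^sub>R w" _ _ _ X],
        auto intro!: derivative_eq_intros deriv[simplified]
             simp: linear_simps has_derivative_bounded_linear[OF deriv])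
  from tendsto_mono[OF at_le[OF subset_UNIV] difference_quotient_tendsto[OF this]]
  have "((\<lambda>t. (X (x + t *\<^sub>R w) - X x) /\<^sub>R t) \<longlongrightarrow> A w) (at_right 0)"
    by simp
  then have "((\<lambda>t. norm ((X (x + t *\<^sub>R w) - X x) /\<^sub>R t)) \<longlongrightarrow> norm (A w)) (at_right 0)"
    by (rule tendsto_norm)
  moreover have "\<forall>\<^sub>F t in at_right 0. norm ((X (x + t *\<^sub>R w) - X x) /\<^sub>R t) \<le> ell * norm w"
    using inside eventually_at_right_less[of 0]
  proof eventually_elim
    case (elim t)
    then have "norm (X (x + t *\<^sub>R w) - X x) \<le> ell * (t * norm w)"
      using lipschitz_onD[OF lip, of "x + t *\<^sub>R w" x] \<open>x \<in> S\<close> by (simp add: dist_norm)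
    then have "norm (X (x + t *\<^sub>R w) - X x) / t \<le> ell * norm w"
      using elim by (simp add: pos_divide_le_eq mult_ac)
    then show ?case
      using elim by (simp add: divide_inverse_commute)
  qed
  ultimately show ?thesis
    by (rule tendsto_upperbound) simp
qed

lemma bounded_linear_norm_bound_from_halfspace:
  fixes A :: "'a::real_inner \<Rightarrow> 'b::real_normed_vector"
  assumes "bounded_linear A" and "n \<noteq> 0"
    and neg: "\<And>w. n \<bullet> w < 0 \<Longrightarrow> norm (A w) \<le> c * norm w"
  shows "norm (A w) \<le> c * norm w"
proof -
  interpret A: bounded_linear A by fact
  have closed_halfspace: "norm (A w) \<le> c * norm w" if "n \<bullet> w \<le> 0" for w
  proof (rule tendsto_le[OF trivial_limit_at_right_real])
    show "((\<lambda>s. c * norm (w - s *\<^sub>R n)) \<longlongrightarrow> c * norm w) (at_right 0)"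
      and "((\<lambda>s. norm (A (w - s *\<^sub>R n))) \<longlongrightarrow> norm (A w)) (at_right 0)"
      by (auto intro!: tendsto_eq_intros A.tendsto)
    show "\<forall>\<^sub>F s in at_right 0. norm (A (w - s *\<^sub>R n)) \<le> c * norm (w - s *\<^sub>R n)"
      using eventually_at_right_less[of 0]
    proof eventually_elim
      case (elim s)
      then have "0 < s * (n \<bullet> n)" using \<open>n \<noteq> 0\<close> by simp
      moreover have "n \<bullet> (w - s *\<^sub>R n) = n \<bullet> w - s * (n \<bullet> n)"
        by (simp add: inner_diff_right)
      ultimately have "n \<bullet> (w - s *\<^sub>R n) < 0"
        using that by linarith
      then show ?case by (rule neg)
    qed
  qed
  show ?thesis
  proof (cases "n \<bullet> w \<le> 0")
    case False
    then have "norm (A (- w)) \<le> c * norm (- w)"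
      by (intro closed_halfspace) simp
    then show ?thesis by (simp add: A.neg)
  qed (rule closed_halfspace)
qed

lemma lipschitz_on_sublevel_derivative_bound:
  fixes F :: "'a::real_inner \<Rightarrow> real" and X :: "'a \<Rightarrow> 'b::real_normed_vector"
  assumes F: "(F has_derivative (\<lambda>v. n \<bullet> v)) (at x)" and "n \<noteq> 0"
    and X: "(X has_derivative A) (at x)" and lip: "ell-lipschitz_on {y. F y \<le> F x} X"
  shows "norm (A w) \<le> ell * norm w"
proof (rule bounded_linear_norm_bound_from_halfspace[OF has_derivative_bounded_linear[OF X] \<open>n \<noteq> 0\<close>])
  fix w assume "n \<bullet> w < 0"
  from descent_direction_eventually_below[OF F this]
  have "\<forall>\<^sub>F t in at_right 0. x + t *\<^sub>R w \<in> {y. F y \<le> F x}"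
    by (auto elim: eventually_mono)
  then show "norm (A w) \<le> ell * norm w"
    using lipschitz_on_directional_derivative_bound[OF lip X] by simp
qed

lemma is_gradient_unique:
  fixes G :: "'a::euclidean_space \<Rightarrow> 'a"
  assumes "is_gradient F G" and "(F has_derivative (\<lambda>v. a \<bullet> v)) (at x)"
  shows "G x = a"
proof -
  have "(\<lambda>v. G x \<bullet> v) = (\<lambda>v. a \<bullet> v)"
    using has_derivative_unique assms unfolding is_gradient_def by blast
  then have "(G x - a) \<bullet> (G x - a) = 0"
    by (metis inner_diff_left right_minus_eq)
  then show ?thesis by simp
qed

lemma convex_quadratic_expansion:
  fixes q :: "'a::euclidean_space \<Rightarrow> real"
  assumes "convex_quadratic q" and "is_gradient q G"
  obtains Q where "\<And>z. 0 \<le> z \<bullet> Q z"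
    and "\<And>y z t. q (y + t *\<^sub>R z) = q y + t * (G y \<bullet> z) + t\<^sup>2 / 2 * (z \<bullet> Q z)"
proof -
  obtain Q b c where lin: "linear Q" and sym: "\<And>x y. Q x \<bullet> y = x \<bullet> Q y"
    and psd: "\<And>x. 0 \<le> x \<bullet> Q x" and q: "q = (\<lambda>x. (1/2) * (x \<bullet> Q x) + b \<bullet> x + c)"
    using assms(1) unfolding convex_quadratic_def by blast
  interpret Q: bounded_linear Q
    using lin by (simp add: linear_conv_bounded_linear)
  have G: "G x = Q x + b" for x
  proof (rule is_gradient_unique[OF assms(2)])
    have "(q has_derivative (\<lambda>v. (1/2) * (x \<bullet> Q v + v \<bullet> Q x) + b \<bullet> v)) (at x)"
      unfolding q using lin
      by (auto intro!: derivative_eq_intros Q.has_derivative)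
    moreover have "(\<lambda>v. (1/2) * (x \<bullet> Q v + v \<bullet> Q x) + b \<bullet> v) = (\<lambda>v. (Q x + b) \<bullet> v)"
      using sym by (auto simp: inner_add_left inner_add_right inner_commute)
    ultimately show "(q has_derivative (\<lambda>v. (Q x + b) \<bullet> v)) (at x)" by simp
  qed
  have "q (y + t *\<^sub>R z) = q y + t * (G y \<bullet> z) + t\<^sup>2 / 2 * (z \<bullet> Q z)" for y z t
    using sym[of y z]
    by (simp add: q G Q.add Q.scale inner_add_left inner_add_right inner_commute
        power2_eq_square algebra_simps)
  with psd show ?thesis by (rule that)
qed

lemma Min_le_telescoping_bound:
  fixes a b :: "nat \<Rightarrow> real"
  assumes "decseq a" and "a \<longlonglongrightarrow> l" and "0 \<le> C"
    and b: "\<And>k. b k \<le> C * (a k - a (Suc k))"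
  shows "Min (b ` {0..N}) \<le> C * (a 0 - l) / (real N + 1)"
proof -
  have "(real N + 1) * Min (b ` {0..N}) \<le> (\<Sum>k\<in>{0..N}. b k)"
    using sum_bounded_below[of "{0..N}" "Min (b ` {0..N})" b] by (simp add: add.commute)
  also have "\<dots> \<le> (\<Sum>k<Suc N. C * (a k - a (Suc k)))"
    using b by (simp add: atLeast0AtMost lessThan_Suc_atMost sum_mono)
  also have "\<dots> = C * (a 0 - a (Suc N))"
    by (simp add: sum_distrib_left[symmetric] sum_lessThan_telescope')
  also have "\<dots> \<le> C * (a 0 - l)"
    using decseq_ge[OF assms(1,2)] \<open>0 \<le> C\<close> by (simp add: mult_left_mono)
  finally show ?thesis
    by (simp add: pos_le_divide_eq mult.commute)
qed

lemma continuous_on_le_SUP_Icc: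
  fixes \<phi> :: "real \<Rightarrow> real"
  assumes "continuous_on {a..b} \<phi>" and "t \<in> {a..b}"
  shows "\<phi> t \<le> (SUP s\<in>{a..b}. \<phi> s)"
proof (rule cSUP_upper[OF assms(2)])
  show "bdd_above (\<phi> ` {a..b})"
    using assms(1)
    by (intro bounded_imp_bdd_above compact_imp_bounded compact_continuous_image) auto
qed

locale gauss_newton_problem =
  fixes h :: "'x::euclidean_space \<Rightarrow> real" and g :: "'u::euclidean_space \<Rightarrow> real"
    and xt :: "'u \<Rightarrow> 'x" and Dx :: "'u \<Rightarrow> ('u \<Rightarrow>\<^sub>L 'x)"
    and grad_h :: "'x \<Rightarrow> 'x" and grad_g :: "'u \<Rightarrow> 'u" and grad_f :: "'u \<Rightarrow> 'u"
    and f :: "'u \<Rightarrow> real" and Lh Lg :: real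
  assumes h_quad: "convex_quadratic h" and g_quad: "convex_quadratic g"
    and h_grad: "is_gradient h grad_h" and Lh: "Lh-lipschitz_on UNIV grad_h"
    and g_grad: "is_gradient g grad_g" and Lg: "Lg-lipschitz_on UNIV grad_g"
    and xt_deriv: "\<And>w. (xt has_derivative blinfun_apply (Dx w)) (at w)"
    and f_def: "\<And>w. f w = h (xt w) + g w"
    and f_grad: "is_gradient f grad_f"
begin

lemma Lh_nonneg: "0 \<le> Lh"
  using lipschitz_on_nonneg[OF Lh] .

lemma Lg_nonneg: "0 \<le> Lg"
  using lipschitz_on_nonneg[OF Lg] .

definition model :: "real \<Rightarrow> 'u \<Rightarrow> 'u \<Rightarrow> real" where
  "model \<gamma> u v = conv_model h g xt Dx (u + v) u + (1 / (2 * \<gamma>)) * (norm v)\<^sup>2"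

definition model_deriv :: "real \<Rightarrow> 'u \<Rightarrow> 'u \<Rightarrow> 'u \<Rightarrow> real" where
  "model_deriv \<gamma> u v d = grad_h (xt u + Dx u v) \<bullet> Dx u d + grad_g (u + v) \<bullet> d + (v \<bullet> d) / \<gamma>"

lemma model_expansion:
  obtains R where "\<And>d. (norm d)\<^sup>2 / (2 * \<gamma>) \<le> R d"
    and "\<And>v d t. model \<gamma> u (v + t *\<^sub>R d) = model \<gamma> u v + t * model_deriv \<gamma> u v d + t\<^sup>2 * R d"
proof -
  obtain Qh where Qh_psd: "\<And>z. 0 \<le> z \<bullet> Qh z"
    and Qh: "\<And>y z t. h (y + t *\<^sub>R z) = h y + t * (grad_h y \<bullet> z) + t\<^sup>2 / 2 * (z \<bullet> Qh z)"
    using convex_quadratic_expansion[OF h_quad h_grad] by blast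
  obtain Qg where Qg_psd: "\<And>z. 0 \<le> z \<bullet> Qg z"
    and Qg: "\<And>y z t. g (y + t *\<^sub>R z) = g y + t * (grad_g y \<bullet> z) + t\<^sup>2 / 2 * (z \<bullet> Qg z)"
    using convex_quadratic_expansion[OF g_quad g_grad] by blast
  define R where
    "R d = (Dx u d \<bullet> Qh (Dx u d)) / 2 + (d \<bullet> Qg d) / 2 + (norm d)\<^sup>2 / (2 * \<gamma>)" for d
  show ?thesis
  proof
    show "(norm d)\<^sup>2 / (2 * \<gamma>) \<le> R d" for d
      unfolding R_def using Qh_psd[of "Dx u d"] Qg_psd[of d] by simp
    show "model \<gamma> u (v + t *\<^sub>R d) = model \<gamma> u v + t * model_deriv \<gamma> u v d + t\<^sup>2 * R d"
      for v d t
    proof -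
      have "(norm (v + t *\<^sub>R d))\<^sup>2 = (norm v)\<^sup>2 + 2 * t * (v \<bullet> d) + t\<^sup>2 * (norm d)\<^sup>2"
        unfolding power2_norm_eq_inner
        by (simp add: inner_add_left inner_add_right inner_commute power2_eq_square algebra_simps)
      then show ?thesis
        using Qh[of "xt u + Dx u v" t "Dx u d"] Qg[of "u + v" t d]
        by (simp add: model_def model_deriv_def conv_model_def R_def blinfun.add_right
            blinfun.scaleR_right add.assoc add_divide_distrib diff_divide_distrib algebra_simps)
    qed
  qed
qed

lemma model_argmin_deriv_eq_0:
  assumes "is_arg_min (model \<gamma> u) (\<lambda>_. True) v"
  shows "model_deriv \<gamma> u v d = 0"
proof -
  obtain R where "\<And>v d t. model \<gamma> u (v + t *\<^sub>R d) = model \<gamma> u v + t * model_deriv \<gamma> u v d + t\<^sup>2 * R d"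
    using model_expansion[of \<gamma> u] by metis
  moreover have "model \<gamma> u v \<le> model \<gamma> u (v + t *\<^sub>R d)" for t
    using assms by (simp add: is_arg_min_def not_less)
  ultimately show ?thesis
    by (intro linear_coeff_zero_if_quadratic_nonneg[of _ "R d"]) force
qed

lemma model_argmin_le:
  assumes "is_arg_min (model \<gamma> u) (\<lambda>_. True) v"
  shows "model \<gamma> u v + (norm v)\<^sup>2 / (2 * \<gamma>) \<le> f u"
proof -
  obtain R where R_ge: "\<And>d. (norm d)\<^sup>2 / (2 * \<gamma>) \<le> R d"
    and R: "\<And>v d t. model \<gamma> u (v + t *\<^sub>R d) = model \<gamma> u v + t * model_deriv \<gamma> u v d + t\<^sup>2 * R d"
    using model_expansion[of \<gamma> u] by metis
  have "f u = model \<gamma> u (v + 1 *\<^sub>R (- v))"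
    by (simp add: model_def conv_model_def f_def)
  also have "\<dots> = model \<gamma> u v + R (- v)"
    using R[of v 1 "- v"] model_argmin_deriv_eq_0[OF assms, of "- v"] by simp
  finally show ?thesis
    using R_ge[of "- v"] by simp
qed

lemma grad_f_inner:
  "grad_f w \<bullet> d = grad_h (xt w) \<bullet> Dx w d + grad_g w \<bullet> d"
proof -
  have "(f has_derivative (\<lambda>d. grad_h (xt w) \<bullet> Dx w d + grad_g w \<bullet> d)) (at w)"
    unfolding f_def[abs_def]
    using h_grad g_grad unfolding is_gradient_def
    by (auto intro!: derivative_eq_intros has_derivative_compose[OF xt_deriv])
  then have "(\<lambda>d. grad_f w \<bullet> d) = (\<lambda>d. grad_h (xt w) \<bullet> Dx w d + grad_g w \<bullet> d)"
    using has_derivative_unique f_grad unfolding is_gradient_def by blast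
  then show ?thesis by metis
qed

lemma grad_f_bound_at_stationary:
  assumes stationary: "\<And>d. model_deriv \<gamma> u v d = 0" and "0 < \<gamma>"
    and Dx_bound: "\<And>w. norm (Dx u w) \<le> ell * norm w"
  shows "norm (grad_f u) \<le> (ell\<^sup>2 * Lh + Lg + 1 / \<gamma>) * norm v"
proof -
  define n where "n = grad_f u"
  define y where "y = xt u"
  have "(norm n)\<^sup>2
      = (grad_h y - grad_h (y + Dx u v)) \<bullet> Dx u n + (grad_g u - grad_g (u + v)) \<bullet> n - (v \<bullet> n) / \<gamma>"
    using grad_f_inner[of u n] stationary[of n]
    by (simp add: model_deriv_def n_def y_def power2_norm_eq_inner inner_diff_left algebra_simps)
  also have "\<dots> \<le> norm (grad_h y - grad_h (y + Dx u v)) * norm (Dx u n)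
      + norm (grad_g u - grad_g (u + v)) * norm n + norm v * norm n / \<gamma>"
    using norm_cauchy_schwarz[of "grad_h y - grad_h (y + Dx u v)" "Dx u n"]
      norm_cauchy_schwarz[of "grad_g u - grad_g (u + v)" n]
      divide_right_mono[OF norm_cauchy_schwarz[of "- v" n], of \<gamma>] \<open>0 < \<gamma>\<close>
    by simp
  also have "\<dots> \<le> (Lh * norm (Dx u v)) * norm (Dx u n) + (Lg * norm v) * norm n
      + norm v * norm n / \<gamma>"
    using lipschitz_onD[OF Lh, of y "y + Dx u v"] lipschitz_onD[OF Lg, of u "u + v"]
    by (intro add_mono mult_right_mono) (auto simp: dist_norm)
  also have "\<dots> \<le> (Lh * (ell * norm v)) * (ell * norm n) + (Lg * norm v) * norm n
      + norm v * norm n / \<gamma>"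
    using Dx_bound[of v] Dx_bound[of n] order_trans[OF norm_ge_zero Dx_bound[of v]]
      Lh_nonneg Lg_nonneg
    by (intro add_mono mult_mono mult_left_mono) auto
  also have "\<dots> = ((ell\<^sup>2 * Lh + Lg + 1 / \<gamma>) * norm v) * norm n"
    by (simp add: algebra_simps power2_eq_square)
  finally have "norm n * norm n \<le> ((ell\<^sup>2 * Lh + Lg + 1 / \<gamma>) * norm v) * norm n"
    by (simp add: power2_eq_square)
  moreover have "0 \<le> (ell\<^sup>2 * Lh + Lg + 1 / \<gamma>) * norm v"
    using Lh_nonneg Lg_nonneg \<open>0 < \<gamma>\<close> by simp
  ultimately show ?thesis
    unfolding n_def by (cases "grad_f u = 0") auto
qed

lemma model_step_descent:
  assumes "is_arg_min (model \<gamma> u) (\<lambda>_. True) (u' - u)" and "f u' \<le> model \<gamma> u (u' - u)"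
  shows "(norm (u' - u))\<^sup>2 / (2 * \<gamma>) \<le> f u - f u'"
  using model_argmin_le[OF assms(1)] assms(2) by linarith

lemma model_step_grad_bound:
  assumes argmin: "is_arg_min (model \<gamma> u) (\<lambda>_. True) (u' - u)"
    and decrease: "f u' \<le> model \<gamma> u (u' - u)" and "0 < \<gamma>"
    and lip: "ell-lipschitz_on {w. f w \<le> f u} xt"
  shows "(norm (grad_f u))\<^sup>2 \<le> 2 * (\<gamma> * (ell\<^sup>2 * Lh + Lg + 1 / \<gamma>)\<^sup>2) * (f u - f u')"
proof -
  define K where "K = ell\<^sup>2 * Lh + Lg + 1 / \<gamma>"
  have descent: "(norm (u' - u))\<^sup>2 \<le> 2 * \<gamma> * (f u - f u')"
    using model_step_descent[OF argmin decrease] \<open>0 < \<gamma>\<close> by (simp add: field_simps)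
  have "norm (grad_f u) \<le> K * norm (u' - u)"
  proof (cases "grad_f u = 0")
    case True
    with Lh_nonneg Lg_nonneg \<open>0 < \<gamma>\<close> show ?thesis
      unfolding K_def by simp
  next
    case False
    have "(f has_derivative (\<lambda>d. grad_f u \<bullet> d)) (at u)"
      using f_grad unfolding is_gradient_def ..
    then have "norm (Dx u w) \<le> ell * norm w" for w
      using lipschitz_on_sublevel_derivative_bound[OF _ False xt_deriv lip] by blast
    then show ?thesis
      unfolding K_def
      by (rule grad_f_bound_at_stationary[OF model_argmin_deriv_eq_0[OF argmin] \<open>0 < \<gamma>\<close>])
  qed
  then have "(norm (grad_f u))\<^sup>2 \<le> K\<^sup>2 * (norm (u' - u))\<^sup>2"
    by (metis norm_ge_zero power_mono power_mult_distrib)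
  also have "\<dots> \<le> K\<^sup>2 * (2 * \<gamma> * (f u - f u'))"
    using descent by (rule mult_left_mono) simp
  finally show ?thesis
    unfolding K_def by (simp add: algebra_simps)
qed

context
  fixes u :: "nat \<Rightarrow> 'u" and \<gamma> :: "nat \<Rightarrow> real"
  assumes argmin: "\<And>k. is_arg_min (model (\<gamma> k) (u k)) (\<lambda>_. True) (u (Suc k) - u k)"
    and decrease: "\<And>k. f (u (Suc k)) \<le> model (\<gamma> k) (u k) (u (Suc k) - u k)"
    and gamma_pos: "\<And>k. 0 < \<gamma> k"
begin

lemma model_iterates_decseq: "decseq (\<lambda>k. f (u k))"
proof (rule decseq_SucI)
  fix k
  have "0 \<le> (norm (u (Suc k) - u k))\<^sup>2 / (2 * \<gamma> k)"
    using gamma_pos[of k] by simp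
  then show "f (u (Suc k)) \<le> f (u k)"
    using model_step_descent[OF argmin decrease, of k] by linarith
qed

lemma model_iterates_grad_bound:
  assumes lip: "ell-lipschitz_on {w. f w \<le> f (u 0)} xt"
    and L: "\<And>k. \<gamma> k * (ell\<^sup>2 * Lh + Lg + 1 / \<gamma> k)\<^sup>2 \<le> L"
  shows "(norm (grad_f (u k)))\<^sup>2 \<le> 2 * L * (f (u k) - f (u (Suc k)))"
proof -
  have "ell-lipschitz_on {w. f w \<le> f (u k)} xt"
    using decseqD[OF model_iterates_decseq, of 0 k] by (intro lipschitz_on_subset[OF lip]) auto
  then have "(norm (grad_f (u k)))\<^sup>2
      \<le> 2 * (\<gamma> k * (ell\<^sup>2 * Lh + Lg + 1 / \<gamma> k)\<^sup>2) * (f (u k) - f (u (Suc k)))"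
    by (rule model_step_grad_bound[OF argmin decrease gamma_pos])
  also have "\<dots> \<le> 2 * L * (f (u k) - f (u (Suc k)))"
    using L[of k] decseqD[OF model_iterates_decseq, of k "Suc k"] by (intro mult_right_mono) auto
  finally show ?thesis .
qed

end

end

theorem proposition7:
  fixes h :: "'x::euclidean_space \<Rightarrow> real"
    and g :: "'u::euclidean_space \<Rightarrow> real"
    and xt :: "'u \<Rightarrow> 'x"
    and Dx :: "'u \<Rightarrow> ('u \<Rightarrow>\<^sub>L 'x)"
    and grad_h :: "'x \<Rightarrow> 'x" and grad_g :: "'u \<Rightarrow> 'u" and grad_f :: "'u \<Rightarrow> 'u"
    and f :: "'u \<Rightarrow> real"
    and Lh Lg ell gmin gmax :: real
    and u :: "nat \<Rightarrow> 'u" and \<gamma> :: "nat \<Rightarrow> real"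
  assumes h_quad: "convex_quadratic h" and g_quad: "convex_quadratic g"
    and h_grad: "is_gradient h grad_h" and Lh: "Lh-lipschitz_on UNIV grad_h"
    and g_grad: "is_gradient g grad_g" and Lg: "Lg-lipschitz_on UNIV grad_g"
    and xt_deriv: "\<And>w. (xt has_derivative blinfun_apply (Dx w)) (at w)"
    and Dx_cont: "continuous_on UNIV Dx"
    and f_def: "\<And>w. f w = h (xt w) + g w"
    and f_grad: "is_gradient f grad_f"
    and ell: "ell-lipschitz_on {w. f w \<le> f (u 0)} xt"
    and gmin_pos: "0 < gmin" and gmin_le: "gmin \<le> gmax"
    and gamma_bounds: "\<And>k. gmin \<le> \<gamma> k \<and> \<gamma> k \<le> gmax"
    and step: "\<And>k. is_arg_min
                 (\<lambda>v. conv_model h g xt Dx (u k + v) (u k) + (1 / (2 * \<gamma> k)) * (norm v)\<^sup>2)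
                 (\<lambda>_. True) (u (Suc k) - u k)"
    and suff_decrease: "\<And>k. f (u (Suc k))
                 \<le> conv_model h g xt Dx (u (Suc k)) (u k)
                    + (1 / (2 * \<gamma> k)) * (norm (u (Suc k) - u k))\<^sup>2"
  shows "decseq (\<lambda>k. f (u k)) \<and>
         (\<forall>fstar N. ((\<lambda>k. f (u k)) \<longlonglongrightarrow> fstar) \<longrightarrow>
            Min ((\<lambda>k. (norm (grad_f (u k)))\<^sup>2) ` {0..N})
              \<le> 2 * (SUP t\<in>{gmin..gmax}. t * (ell\<^sup>2 * Lh + Lg + 1 / t)\<^sup>2)
                  * (f (u 0) - fstar) / (real N + 1))"
proof -
  interpret gauss_newton_problem h g xt Dx grad_h grad_g grad_f f Lh Lg
    by unfold_locales (fact assms)+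
  define L where "L = (SUP t\<in>{gmin..gmax}. t * (ell\<^sup>2 * Lh + Lg + 1 / t)\<^sup>2)"
  have gamma_pos: "0 < \<gamma> k" for k
    using gamma_bounds[of k] gmin_pos by linarith
  have argmin: "is_arg_min (model (\<gamma> k) (u k)) (\<lambda>_. True) (u (Suc k) - u k)" for k
    using step[of k] by (simp add: model_def[abs_def])
  have decrease: "f (u (Suc k)) \<le> model (\<gamma> k) (u k) (u (Suc k) - u k)" for k
    using suff_decrease[of k] by (simp add: model_def)
  have L_upper: "\<gamma> k * (ell\<^sup>2 * Lh + Lg + 1 / \<gamma> k)\<^sup>2 \<le> L" for k
    unfolding L_def using gamma_bounds[of k] gmin_pos
    by (intro continuous_on_le_SUP_Icc continuous_intros) auto
  have "0 \<le> 2 * L"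
    using order_trans[OF _ L_upper[of 0]] gamma_pos[of 0] by simp
  note dec = model_iterates_decseq[where u = u and \<gamma> = \<gamma>, OF argmin decrease gamma_pos]
  show ?thesis
    using dec Min_le_telescoping_bound[OF dec _ \<open>0 \<le> 2 * L\<close>
        model_iterates_grad_bound[where u = u and \<gamma> = \<gamma>, OF argmin decrease gamma_pos ell L_upper]]
    unfolding L_def by simp
qed

end
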